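(* Let $n,m,k$ be positive integers with $k<m\le kn$. For every single-category instance with $n$ agents, $m$ goods and cardinality constraint $k$, $$\frac{\text{OPT-USW}(I)}{\max_{\mathcal{A}\in \mathcal{C}_k(I)}\text{USW}(\mathcal{A})}\le \frac{1}{2}\left(1+\sqrt{1+\frac{m-1}{k}}\right).$$ Moreover, if $m=k(c^2-1)+1$ for some integer $c\ge 2$, then there exists such an instance (with some number $n$ of agents satisfying $kn\ge m$) for which this ratio equals $\frac{1}{2}\left(1+\sqrt{1+\frac{m-1}{k}}\right)$. Consequently, the utilitarian price of cardinality in the single-category case is $\frac{1}{2}\left(1+\sqrt{1+\frac{m-1}{k}}\right)$ (as an upper bound valid for all instances, attained whenever $m=k(c^2-1)+1$).
   Context: A single-category instance consists of a set $N$ of $n$ agents and a set $M$ of $m$ indivisible goods; each agent $i$ has an additive utility function $u_i:2^M\to\mathbb{R}_{\ge 0}$ with $u_i(\emptyset)=0$ and $u_i(M)=1$ (normalized). An allocation $\mathcal{A}=(A_1,\dots,A_n)$ is a partition of $M$ into $n$ (possibly empty) bundles, agent $i$ receiving $A_i$. Given a positive integer $k$ (the cardinality constraint, with $k\ge m/n$), an allocation is cardinal if $|A_i|\le k$ for all $i$; $\mathcal{C}_k(I)$ denotes the set of cardinal allocations. $\text{USW}(\mathcal{A})=\sum_{i\in N}u_i(A_i)$, and $\text{OPT-USW}(I)$ is the maximum of $\text{USW}$ over all allocations. The utilitarian price of cardinality is the supremum of the ratio $\text{OPT-USW}(I)/\max_{\mathcal{A}\in\mathcal{C}_k(I)}\text{USW}(\mathcal{A})$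 over instances. *)

theory Defs
  imports Complex_Main
begin

text \<open>Agents are 0..<n, goods are 0..<m. An instance is given by
  u :: agent => good => real, the additive utility of agent i for good g.\<close>

definition valid_instance :: "nat \<Rightarrow> nat \<Rightarrow> (nat \<Rightarrow> nat \<Rightarrow> real) \<Rightarrow> bool" where
  "valid_instance n m u \<longleftrightarrow>
     (\<forall>i<n. \<forall>g<m. u i g \<ge> 0) \<and> (\<forall>i<n. (\<Sum>g<m. u i g) = 1)"

definition util :: "(nat \<Rightarrow> nat \<Rightarrow> real) \<Rightarrow> nat \<Rightarrow> nat set \<Rightarrow> real" where
  "util u i S = (\<Sum>g\<in>S. u i g)"

definition is_allocation :: "nat \<Rightarrow> nat \<Rightarrow> (nat \<Rightarrow> nat set) \<Rightarrow> bool" where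
  "is_allocation n m A \<longleftrightarrow>
     (\<forall>i<n. A i \<subseteq> {..<m}) \<and>
     (\<forall>i<n. \<forall>j<n. i \<noteq> j \<longrightarrow> A i \<inter> A j = {}) \<and>
     (\<Union>i<n. A i) = {..<m}"

definition is_cardinal :: "nat \<Rightarrow> nat \<Rightarrow> nat \<Rightarrow> (nat \<Rightarrow> nat set) \<Rightarrow> bool" where
  "is_cardinal n m k A \<longleftrightarrow> is_allocation n m A \<and> (\<forall>i<n. card (A i) \<le> k)"

definition USW :: "nat \<Rightarrow> (nat \<Rightarrow> nat \<Rightarrow> real) \<Rightarrow> (nat \<Rightarrow> nat set) \<Rightarrow> real" where
  "USW n u A = (\<Sum>i<n. util u i (A i))"

definition OPT_USW :: "nat \<Rightarrow> nat \<Rightarrow> (nat \<Rightarrow> nat \<Rightarrow> real) \<Rightarrow> real" where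
  "OPT_USW n m u = Max {USW n u A | A. is_allocation n m A}"

definition MAX_CARD_USW :: "nat \<Rightarrow> nat \<Rightarrow> nat \<Rightarrow> (nat \<Rightarrow> nat \<Rightarrow> real) \<Rightarrow> real" where
  "MAX_CARD_USW n m k u = Max {USW n u A | A. is_cardinal n m k A}"

definition poc_bound :: "nat \<Rightarrow> nat \<Rightarrow> real" where
  "poc_bound m k = (1 + sqrt (1 + (real m - 1) / real k)) / 2"

end

theory Submission
  imports Defs "HOL-Library.FuncSet" "HOL-Number_Theory.Cong"
begin

text \<open>
  Let \<rho> = (1 + sqrt (1 + (m - 1) / k)) / 2, so that 4 \<rho> (\<rho> - 1) k = m - 1. Give every good to
  an agent valuing it most; the welfare W of this allocation bounds OPT-USW, and if no agent owns
  more than k goods it is already cardinal. Otherwise some of the k n places are free. Let \<nu> g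
  be the expected utility for g of the holder of a uniformly random free place, so that the
  \<nu>-values of all goods add up to 1. Each agent keeps the min (b, k) of its b goods on which it
  beats \<nu> the most, and the remaining goods are put into the free places, cyclically rotated to
  reach at least their \<nu>-value. This cardinal allocation is worth at least
  1 + (\<Sum>j. a j (w j - v j)), where w j and v j are the u j- and \<nu>-values of the goods of
  agent j and a j = min (b j, k) / b j. By AM-GM, (w j - v j) (1 - \<rho> a j) \<le> (b j - v j) / (4 \<rho> k),
  and summing over j gives W \<le> \<rho> (1 + (\<Sum>j. a j (w j - v j))).

  For m = k (c^2 - 1) + 1 the bound is attained: c - 1 agents each value their own block of
  k (c + 1) goods uniformly and all other agents value only the one remaining good. Then OPT-USW
  is c, but under the constraint each block agent collects only k of its goods, so the best
  cardinal welfare is (c - 1) / (c + 1) + 1 and the ratio is (c + 1) / 2 = \<rho>.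
\<close>

section \<open>Allocations\<close>

lemma sum_fibres:
  fixes f :: "nat \<Rightarrow> nat" and \<phi> :: "nat \<Rightarrow> 'a::comm_monoid_add"
  assumes "\<And>g. g < m \<Longrightarrow> f g < n"
  shows "(\<Sum>i<n. \<Sum>g\<in>{g. g < m \<and> f g = i}. \<phi> g) = (\<Sum>g<m. \<phi> g)"
  using sum.group[of "{..<m}" "{..<n}" f \<phi>] assms by (auto simp: image_subset_iff)

lemma is_allocation_fibres:
  assumes "\<And>g. g < m \<Longrightarrow> f g < n"
  shows "is_allocation n m (\<lambda>i. {g. g < m \<and> f g = i})"
  using assms unfolding is_allocation_def by auto

lemma usw_fibres:
  assumes "\<And>g. g < m \<Longrightarrow> f g < n"
  shows "USW n u (\<lambda>i. {g. g < m \<and> f g = i}) = (\<Sum>g<m. u (f g) g)"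
proof -
  have "USW n u (\<lambda>i. {g. g < m \<and> f g = i}) = (\<Sum>i<n. \<Sum>g\<in>{g. g < m \<and> f g = i}. u (f g) g)"
    unfolding USW_def util_def by (intro sum.cong) auto
  also have "\<dots> = (\<Sum>g<m. u (f g) g)"
    using sum_fibres[OF assms] .
  finally show ?thesis .
qed

lemma finite_usw_values: "finite {USW n u A | A. is_allocation n m A}"
proof -
  have "{USW n u A | A. is_allocation n m A} \<subseteq> (\<lambda>A. USW n u A) ` ({..<n} \<rightarrow>\<^sub>E Pow {..<m})"
  proof
    fix x assume "x \<in> {USW n u A | A. is_allocation n m A}"
    then obtain A where "x = USW n u A" and "is_allocation n m A"
      by blast
    then have "x = USW n u (restrict A {..<n})" and "restrict A {..<n} \<in> {..<n} \<rightarrow>\<^sub>E Pow {..<m}"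
      by (auto simp: USW_def is_allocation_def)
    then show "x \<in> (\<lambda>A. USW n u A) ` ({..<n} \<rightarrow>\<^sub>E Pow {..<m})"
      by blast
  qed
  then show ?thesis
    by (rule finite_subset) (simp add: finite_PiE)
qed

lemma usw_le_opt_usw: "is_allocation n m A \<Longrightarrow> USW n u A \<le> OPT_USW n m u"
  unfolding OPT_USW_def using finite_usw_values by (intro Max_ge) auto

lemma usw_le_sum_bound:
  assumes A: "is_allocation n m A" and bound: "\<And>i g. i < n \<Longrightarrow> g < m \<Longrightarrow> u i g \<le> \<beta> g"
  shows "USW n u A \<le> (\<Sum>g<m. \<beta> g)"
proof -
  have sub: "A i \<subseteq> {..<m}" if "i < n" for i
    using A that by (simp add: is_allocation_def)
  have "USW n u A \<le> (\<Sum>i<n. \<Sum>g\<in>A i. \<beta> g)"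
    unfolding USW_def util_def using sub bound by (intro sum_mono) auto
  also have "\<dots> = sum \<beta> (\<Union>i<n. A i)"
    using A sub by (subst sum.UNION_disjoint) (auto simp: is_allocation_def intro: finite_subset)
  also have "\<dots> = (\<Sum>g<m. \<beta> g)"
    using A by (simp add: is_allocation_def)
  finally show ?thesis .
qed

lemma opt_usw_le_sum_bound:
  assumes "0 < n" and "\<And>i g. i < n \<Longrightarrow> g < m \<Longrightarrow> u i g \<le> \<beta> g"
  shows "OPT_USW n m u \<le> (\<Sum>g<m. \<beta> g)"
proof -
  have "is_allocation n m (\<lambda>i. {g. g < m \<and> 0 = i})"
    using is_allocation_fibres[of m "\<lambda>_. 0" n] assms(1) by simp
  then show ?thesis
    unfolding OPT_USW_def using finite_usw_values[of n u m] usw_le_sum_bound[OF _ assms(2)]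
    by (subst Max_le_iff) auto
qed

lemma finite_cardinal_usw_values: "finite {USW n u A | A. is_cardinal n m k A}"
  by (rule finite_subset[OF _ finite_usw_values[of n u m]]) (auto simp: is_cardinal_def)

lemma usw_le_max_card_usw: "is_cardinal n m k A \<Longrightarrow> USW n u A \<le> MAX_CARD_USW n m k u"
  unfolding MAX_CARD_USW_def using finite_cardinal_usw_values by (intro Max_ge) auto

lemma max_card_usw_le:
  assumes "is_cardinal n m k A" and "\<And>A. is_cardinal n m k A \<Longrightarrow> USW n u A \<le> x"
  shows "MAX_CARD_USW n m k u \<le> x"
  unfolding MAX_CARD_USW_def using finite_cardinal_usw_values[of n u m k] assms
  by (subst Max_le_iff) auto

section \<open>Averaging arguments\<close>

text \<open>Discarding a smallest element does not lower the average.\<close>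
lemma exists_subset_sum_ge_average:
  fixes \<phi> :: "'a \<Rightarrow> real"
  assumes "finite B" and "k \<le> card B"
  shows "\<exists>K\<subseteq>B. card K = k \<and> real k * sum \<phi> B \<le> real (card B) * sum \<phi> K"
  using assms
proof (induction "card B - k" arbitrary: B)
  case 0
  then show ?case
    by (intro exI[of _ B]) auto
next
  case (Suc d)
  then have "B \<noteq> {}"
    by auto
  then obtain x where x: "x \<in> B" and x_min: "\<And>y. y \<in> B \<Longrightarrow> \<phi> x \<le> \<phi> y"
    using ex_is_arg_min_if_finite[OF \<open>finite B\<close>, of \<phi>] by (auto simp: is_arg_min_linorder)
  define B' where "B' = B - {x}"
  have card_B: "card B = Suc (card B')" and "finite B'"
    using Suc.prems x card_Suc_Diff1[of B x] by (auto simp: B'_def)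
  moreover have "d = card B' - k" "k \<le> card B'"
    using Suc.hyps(2) card_B by arith+
  ultimately obtain K where "K \<subseteq> B'" "card K = k"
    and IH: "real k * sum \<phi> B' \<le> real (card B') * sum \<phi> K"
    using Suc.hyps(1) by blast
  have x_below: "real (card B') * \<phi> x \<le> sum \<phi> B'"
    using sum_bounded_below[of B' "\<phi> x" \<phi>] x_min by (simp add: B'_def)
  have "real (card B') * (real k * sum \<phi> B)
      = real k * (real (card B') * \<phi> x) + real (card B') * (real k * sum \<phi> B')"
    using Suc.prems x by (simp add: B'_def sum.remove algebra_simps)
  also have "\<dots> \<le> real k * sum \<phi> B' + real (card B') * (real k * sum \<phi> B')"
    using x_below by (simp add: mult_left_mono)
  also have "\<dots> = real (card B) * (real k * sum \<phi> B')"
    using card_B by (simp add: algebra_simps)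
  also have "\<dots> \<le> real (card B) * (real (card B') * sum \<phi> K)"
    using IH by (simp add: mult_left_mono)
  finally have "real (card B') * (real k * sum \<phi> B) \<le> real (card B') * (real (card B) * sum \<phi> K)"
    by (simp add: algebra_simps)
  moreover have "K \<subseteq> B"
    using \<open>K \<subseteq> B'\<close> by (auto simp: B'_def)
  moreover have "K = {}" if "card B' = 0"
    using that \<open>card K = k\<close> \<open>K \<subseteq> B'\<close> \<open>k \<le> card B'\<close> \<open>finite B'\<close>
    by (metis card_0_eq finite_subset le_zero_eq)
  ultimately show ?case
    using \<open>card K = k\<close> \<open>k \<le> card B'\<close> by (cases "card B' = 0") auto
qed

lemma exists_subset_sum_ge_fraction:
  fixes \<phi> :: "'a \<Rightarrow> real"
  assumes "finite B"
  shows "\<exists>K\<subseteq>B. card K = min (card B) k \<and> real (min (card B) k) / real (card B) * sum \<phi> B \<le> sum \<phi> K"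
proof (cases "B = {}")
  case False
  then have "0 < card B"
    using assms by (simp add: card_gt_0_iff)
  then show ?thesis
    using exists_subset_sum_ge_average[OF assms, of "min (card B) k" \<phi>]
    by (auto simp: pos_divide_le_eq mult.commute)
qed simp

lemma bij_betw_add_mod:
  fixes a F :: nat
  shows "bij_betw (\<lambda>s. (a + s) mod F) {..<F} {..<F}"
proof (cases "F = 0")
  case False
  have "inj_on (\<lambda>s. (a + s) mod F) {..<F}"
  proof (rule inj_onI)
    fix s s' assume "s \<in> {..<F}" "s' \<in> {..<F}" "(a + s) mod F = (a + s') mod F"
    then show "s = s'"
      by (metis cong_add_lcancel_nat cong_def lessThan_iff mod_less)
  qed
  moreover have "(\<lambda>s. (a + s) mod F) ` {..<F} \<subseteq> {..<F}"
    using False by auto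
  ultimately show ?thesis
    by (simp add: bij_betw_def endo_inj_surj)
qed (simp add: bij_betw_def)

lemma inj_on_rotate_mod:
  fixes \<iota> :: "'a \<Rightarrow> nat"
  assumes "inj_on \<iota> E" and "\<And>e. e \<in> E \<Longrightarrow> \<iota> e < F"
  shows "inj_on (\<lambda>e. (\<iota> e + t) mod F) E"
proof (rule inj_onI)
  fix e e' assume "e \<in> E" "e' \<in> E" "(\<iota> e + t) mod F = (\<iota> e' + t) mod F"
  then have "(t + \<iota> e) mod F = (t + \<iota> e') mod F"
    by (simp add: add.commute)
  then have "\<iota> e = \<iota> e'"
    by (rule inj_onD[OF bij_betw_imp_inj_on[OF bij_betw_add_mod]]) (use assms(2) \<open>e \<in> E\<close> \<open>e' \<in> E\<close> in auto)
  then show "e = e'"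
    using assms(1) \<open>e \<in> E\<close> \<open>e' \<in> E\<close> by (auto dest: inj_onD)
qed

text \<open>Over all cyclic rotations of the placement \<iota>, every element visits every position once.\<close>
lemma exists_rotation_ge_average:
  fixes w :: "nat \<Rightarrow> 'a \<Rightarrow> real" and \<iota> :: "'a \<Rightarrow> nat"
  assumes "0 < F"
  shows "\<exists>t<F. (\<Sum>e\<in>E. \<Sum>s<F. w s e) \<le> real F * (\<Sum>e\<in>E. w ((\<iota> e + t) mod F) e)"
proof (rule ccontr)
  assume "\<not> ?thesis"
  then have "(\<Sum>t<F. real F * (\<Sum>e\<in>E. w ((\<iota> e + t) mod F) e)) < real F * (\<Sum>e\<in>E. \<Sum>s<F. w s e)"
    using assms by (intro sum_bounded_above_strict[of "{..<F}", simplified]) auto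
  also have "\<dots> = real F * (\<Sum>e\<in>E. \<Sum>t<F. w ((\<iota> e + t) mod F) e)"
    using sum.reindex_bij_betw[OF bij_betw_add_mod[of "\<iota> _" F], of "\<lambda>s. w s _"] by simp
  also have "\<dots> = (\<Sum>t<F. real F * (\<Sum>e\<in>E. w ((\<iota> e + t) mod F) e))"
    by (simp add: sum_distrib_left sum.swap[of _ E])
  finally show False
    by simp
qed

lemma card_fst_fibre_le:
  assumes "inj_on \<sigma> E" and "\<sigma> ` E \<subseteq> (SIGMA j:J. {..<c j})"
  shows "card {e\<in>E. fst (\<sigma> e) = j} \<le> c j"
proof -
  have "\<sigma> ` {e\<in>E. fst (\<sigma> e) = j} \<subseteq> {j} \<times> {..<c j}"
  proof
    fix p assume "p \<in> \<sigma> ` {e\<in>E. fst (\<sigma> e) = j}"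
    then obtain e where "e \<in> E" and "p = \<sigma> e" and "fst p = j"
      by auto
    then show "p \<in> {j} \<times> {..<c j}"
      using assms(2) by (cases p) auto
  qed
  then have "card {e\<in>E. fst (\<sigma> e) = j} \<le> card ({j} \<times> {..<c j})"
    by (intro card_inj_on_le[OF inj_on_subset[OF assms(1)]]) auto
  then show ?thesis
    by (simp add: card_cartesian_product)
qed

text \<open>Number the places, put E injectively into them and take the best cyclic rotation.\<close>
lemma exists_capacitated_assignment:
  fixes E :: "'a set" and c :: "nat \<Rightarrow> nat" and v :: "nat \<Rightarrow> 'a \<Rightarrow> real"
  assumes "finite E" and card_E: "card E \<le> (\<Sum>j<n. c j)"
  shows "\<exists>h. (\<forall>e\<in>E. h e < n) \<and> (\<forall>j<n. card {e\<in>E. h e = j} \<le> c j) \<and>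
           (\<Sum>e\<in>E. \<Sum>j<n. real (c j) * v j e) \<le> real (\<Sum>j<n. c j) * (\<Sum>e\<in>E. v (h e) e)"
proof (cases "E = {}")
  case False
  define F where "F = (\<Sum>j<n. c j)"
  define S where "S = (SIGMA j:{..<n}. {..<c j})"
  have "0 < F"
    using card_E \<open>finite E\<close> False card_gt_0_iff unfolding F_def by fastforce
  have "card S = F"
    by (simp add: S_def F_def)
  then obtain \<phi> where \<phi>: "bij_betw \<phi> {..<F} S"
    using ex_bij_betw_nat_finite[of S] by (auto simp: S_def atLeast0LessThan)
  obtain \<iota> where \<iota>: "bij_betw \<iota> E {..<card E}"
    using ex_bij_betw_finite_nat[OF \<open>finite E\<close>] by (auto simp: atLeast0LessThan)
  have \<iota>_lt: "\<iota> e < F" if "e \<in> E" for e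
    using bij_betwE[OF \<iota>] that card_E unfolding F_def by fastforce
  have slots: "(\<Sum>s<F. v (fst (\<phi> s)) e) = (\<Sum>j<n. real (c j) * v j e)" for e
  proof -
    have "(\<Sum>s<F. v (fst (\<phi> s)) e) = (\<Sum>(j, l)\<in>S. v j e)"
      using sum.reindex_bij_betw[OF \<phi>] by (simp add: split_def)
    also have "\<dots> = (\<Sum>j<n. \<Sum>l<c j. v j e)"
      unfolding S_def by (rule sum.Sigma[symmetric]) auto
    finally show ?thesis
      by simp
  qed
  obtain t where "t < F"
    and t: "(\<Sum>e\<in>E. \<Sum>s<F. v (fst (\<phi> s)) e) \<le> real F * (\<Sum>e\<in>E. v (fst (\<phi> ((\<iota> e + t) mod F))) e)"
    using exists_rotation_ge_average[OF \<open>0 < F\<close>, where w = "\<lambda>s. v (fst (\<phi> s))" and \<iota> = \<iota>]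
    by blast
  define slot where "slot e = \<phi> ((\<iota> e + t) mod F)" for e
  have slot_S: "slot ` E \<subseteq> S"
    using bij_betwE[OF \<phi>] \<open>0 < F\<close> by (auto simp: slot_def)
  have "inj_on slot E"
  proof (rule inj_onI)
    fix e e' assume "e \<in> E" "e' \<in> E" "slot e = slot e'"
    then have "(\<iota> e + t) mod F = (\<iota> e' + t) mod F"
      by (intro inj_onD[OF bij_betw_imp_inj_on[OF \<phi>]]) (use \<open>0 < F\<close> in \<open>auto simp: slot_def\<close>)
    then show "e = e'"
      using inj_onD[OF inj_on_rotate_mod[OF bij_betw_imp_inj_on[OF \<iota>] \<iota>_lt]] \<open>e \<in> E\<close> \<open>e' \<in> E\<close>
      by blast
  qed
  then have slot_card: "card {e\<in>E. fst (slot e) = j} \<le> c j" for j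
    using slot_S unfolding S_def by (rule card_fst_fibre_le)
  have slot_lt: "fst (slot e) < n" if "e \<in> E" for e
    using slot_S that by (force simp: S_def)
  have "(\<Sum>e\<in>E. \<Sum>j<n. real (c j) * v j e) \<le> real F * (\<Sum>e\<in>E. v (fst (slot e)) e)"
    using t slots unfolding slot_def by simp
  then show ?thesis
    using slot_lt slot_card unfolding F_def by (intro exI[of _ "\<lambda>e. fst (slot e)"]) auto
qed simp

section \<open>Arithmetic of the bound\<close>

lemma poc_bound_ge_one:
  assumes "0 < k" and "0 < m"
  shows "1 \<le> poc_bound m k"
  using assms by (simp add: poc_bound_def)

lemma poc_bound_equation:
  assumes "0 < k" and "0 < m"
  shows "4 * poc_bound m k * (poc_bound m k - 1) * real k = real m - 1"
proof -
  define s where "s = sqrt (1 + (real m - 1) / real k)"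
  have "s\<^sup>2 = 1 + (real m - 1) / real k"
    using assms unfolding s_def by simp
  moreover have "4 * poc_bound m k * (poc_bound m k - 1) = s\<^sup>2 - 1"
    unfolding poc_bound_def s_def[symmetric] by (simp add: field_simps power2_eq_square)
  ultimately show ?thesis
    using assms by simp
qed

text \<open>For b > k this is the AM-GM inequality x + 1 / (4 x) \<ge> 1 with x = r k / b.\<close>
lemma kept_fraction_am_gm:
  fixes r :: real and b k :: nat
  assumes "1 \<le> r" and "0 < k" and "0 < b"
  shows "1 \<le> r * (real (min b k) / real b) + real b / (4 * r * real k)"
proof (cases "b \<le> k")
  case True
  have "0 \<le> real b / (4 * r * real k)" and "r * (real (min b k) / real b) = r"
    using True assms by simp_all
  then show ?thesis
    using assms(1) by linarith
next
  case False
  have "0 \<le> (real b - 2 * r * real k)\<^sup>2"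
    by simp
  then have "4 * r * real k * real b \<le> 4 * (r * real k)\<^sup>2 + (real b)\<^sup>2"
    by (simp add: power2_eq_square algebra_simps)
  then show ?thesis
    using False assms by (simp add: field_simps power2_eq_square)
qed

lemma owner_loss_bound:
  fixes r v w :: real and b k :: nat
  assumes "1 \<le> r" and "0 < k" and "0 \<le> v" and "v \<le> w" and "w \<le> 1" and "b = 0 \<Longrightarrow> w = 0"
  shows "(w - v) * (1 - r * (real (min b k) / real b)) \<le> (real b - v) / (4 * r * real k)"
proof (cases "b = 0")
  case False
  define d where "d = real b / (4 * r * real k)"
  have "0 \<le> d"
    using assms by (simp add: d_def)
  have "1 - r * (real (min b k) / real b) \<le> d"
    using kept_fraction_am_gm[OF assms(1,2), of b] False unfolding d_def by linarith
  then have "(w - v) * (1 - r * (real (min b k) / real b)) \<le> (w - v) * d"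
    using assms(4) by (intro mult_left_mono) auto
  also have "\<dots> \<le> (1 - v) * d"
    using assms(5) \<open>0 \<le> d\<close> by (intro mult_right_mono) auto
  also have "\<dots> = ((1 - v) * real b) / (4 * r * real k)"
    by (simp add: d_def)
  also have "\<dots> \<le> (real b - v) / (4 * r * real k)"
  proof (intro divide_right_mono)
    have "v * 1 \<le> v * real b"
      using assms(3) False by (intro mult_left_mono) auto
    then show "(1 - v) * real b \<le> real b - v"
      by (simp add: algebra_simps)
  qed (use assms in simp)
  finally show ?thesis .
next
  case True
  then have "w = 0" and "v = 0"
    using assms(3-6) by auto
  then show ?thesis
    using True by simp
qed

text \<open>Summing the per-agent bounds, the right-hand sides add up to (m - 1) / (4 r k) = r - 1.\<close>
lemma sum_owner_loss_bound:
  fixes r :: real and w v :: "nat \<Rightarrow> real" and b :: "nat \<Rightarrow> nat"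
  assumes r: "1 \<le> r" "4 * r * (r - 1) * real k = real m - 1" and "0 < k"
    and wv: "\<And>j. j < n \<Longrightarrow> 0 \<le> v j \<and> v j \<le> w j \<and> w j \<le> 1 \<and> (b j = 0 \<longrightarrow> w j = 0)"
    and sum_b: "(\<Sum>j<n. b j) = m" and sum_v: "(\<Sum>j<n. v j) = 1"
  shows "(\<Sum>j<n. w j) \<le> r * (1 + (\<Sum>j<n. real (min (b j) k) / real (b j) * (w j - v j)))"
proof -
  define a where "a j = real (min (b j) k) / real (b j)" for j
  have "(\<Sum>j<n. (w j - v j) * (1 - r * a j)) \<le> (\<Sum>j<n. (real (b j) - v j) / (4 * r * real k))"
    unfolding a_def using owner_loss_bound[OF r(1) \<open>0 < k\<close>] wv by (intro sum_mono) auto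
  also have "\<dots> = (real m - 1) / (4 * r * real k)"
    using sum_b sum_v by (simp add: sum_divide_distrib[symmetric] sum_subtractf flip: of_nat_sum)
  also have "\<dots> = r - 1"
    using r \<open>0 < k\<close> by (simp add: field_simps)
  finally have "(\<Sum>j<n. w j) - 1 - r * (\<Sum>j<n. a j * (w j - v j)) \<le> r - 1"
    using sum_v by (simp add: algebra_simps sum_subtractf sum.distrib sum_distrib_left)
  then show ?thesis
    unfolding a_def by (simp add: algebra_simps)
qed

lemma poc_bound_square:
  assumes "0 < k" and "1 \<le> c"
  shows "poc_bound (k * (c\<^sup>2 - 1) + 1) k = (1 + real c) / 2"
proof -
  have "real (k * (c\<^sup>2 - 1) + 1) - 1 = real k * ((real c)\<^sup>2 - 1)"
    using assms by simp
  then have "1 + (real (k * (c\<^sup>2 - 1) + 1) - 1) / real k = (real c)\<^sup>2"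
    using assms by simp
  then show ?thesis
    by (simp add: poc_bound_def)
qed

section \<open>Keeping some goods and spreading the rest\<close>

text \<open>The expected utility for g of the agent holding a uniformly random one of the places, agent j
  holding c j of them.\<close>
definition spread :: "nat \<Rightarrow> (nat \<Rightarrow> nat) \<Rightarrow> (nat \<Rightarrow> nat \<Rightarrow> real) \<Rightarrow> nat \<Rightarrow> real" where
  "spread n c u g = (\<Sum>j<n. real (c j) * u j g) / real (\<Sum>j<n. c j)"

lemma spread_nonneg: "valid_instance n m u \<Longrightarrow> g < m \<Longrightarrow> 0 \<le> spread n c u g"
  unfolding spread_def valid_instance_def by (auto intro!: divide_nonneg_nonneg sum_nonneg)

lemma spread_le:
  assumes "0 < (\<Sum>j<n. c j)" and "\<And>j. j < n \<Longrightarrow> u j g \<le> x"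
  shows "spread n c u g \<le> x"
proof -
  have "(\<Sum>j<n. real (c j) * u j g) \<le> (\<Sum>j<n. real (c j) * x)"
    using assms(2) by (intro sum_mono mult_left_mono) auto
  also have "\<dots> = x * (\<Sum>j<n. real (c j))"
    by (simp add: sum_distrib_left mult.commute)
  finally show ?thesis
    using assms(1) by (simp add: spread_def pos_divide_le_eq flip: of_nat_sum)
qed

lemma sum_spread:
  assumes "valid_instance n m u" and "0 < (\<Sum>j<n. c j)"
  shows "(\<Sum>g<m. spread n c u g) = 1"
proof -
  have "(\<Sum>g<m. \<Sum>j<n. real (c j) * u j g) = (\<Sum>j<n. real (c j) * (\<Sum>g<m. u j g))"
    by (simp add: sum.swap[of _ "{..<m}"] sum_distrib_left)
  also have "\<dots> = real (\<Sum>j<n. c j)"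
    using assms(1) by (simp add: valid_instance_def)
  moreover have "0 < (\<Sum>j<n. real (c j))"
    using assms(2) by (metis of_nat_0_less_iff of_nat_sum)
  ultimately show ?thesis
    by (simp add: spread_def sum_divide_distrib[symmetric])
qed

lemma is_cardinal_keep_and_assign:
  fixes K :: "nat \<Rightarrow> nat set" and n m :: nat
  defines "E \<equiv> {..<m} - (\<Union>j<n. K j)"
  assumes K_sub: "\<And>j. j < n \<Longrightarrow> K j \<subseteq> {..<m}"
    and K_disj: "\<And>i j. i < n \<Longrightarrow> j < n \<Longrightarrow> i \<noteq> j \<Longrightarrow> K i \<inter> K j = {}"
    and h_lt: "\<And>e. e \<in> E \<Longrightarrow> h e < n"
    and card_le: "\<And>j. j < n \<Longrightarrow> card (K j) + card {e\<in>E. h e = j} \<le> k"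
  shows "is_cardinal n m k (\<lambda>j. K j \<union> {e\<in>E. h e = j})"
  unfolding is_cardinal_def is_allocation_def
proof (intro conjI allI impI)
  fix i assume "i < n"
  then show "K i \<union> {e\<in>E. h e = i} \<subseteq> {..<m}"
    using K_sub by (auto simp: E_def)
  show "card (K i \<union> {e\<in>E. h e = i}) \<le> k"
    using card_Un_le card_le[OF \<open>i < n\<close>] le_trans by blast
  fix j assume "j < n" "i \<noteq> j"
  then show "(K i \<union> {e\<in>E. h e = i}) \<inter> (K j \<union> {e\<in>E. h e = j}) = {}"
    using K_disj[of i j] \<open>i < n\<close> by (auto simp: E_def)
next
  have "g \<in> (\<Union>j<n. K j \<union> {e\<in>E. h e = j})" if "g < m" for g
  proof (cases "g \<in> E")
    case True
    then show ?thesis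
      using h_lt by auto
  next
    case False
    then show ?thesis
      using that by (auto simp: E_def)
  qed
  then show "(\<Union>j<n. K j \<union> {e\<in>E. h e = j}) = {..<m}"
    using K_sub by (auto simp: E_def)
qed

lemma usw_keep_and_assign:
  fixes K :: "nat \<Rightarrow> nat set" and n m :: nat
  defines "E \<equiv> {..<m} - (\<Union>j<n. K j)"
  assumes K_sub: "\<And>j. j < n \<Longrightarrow> K j \<subseteq> {..<m}" and h_lt: "\<And>e. e \<in> E \<Longrightarrow> h e < n"
  shows "USW n u (\<lambda>j. K j \<union> {e\<in>E. h e = j}) = (\<Sum>j<n. util u j (K j)) + (\<Sum>e\<in>E. u (h e) e)"
proof -
  have "USW n u (\<lambda>j. K j \<union> {e\<in>E. h e = j}) = (\<Sum>j<n. util u j (K j) + (\<Sum>e\<in>{e\<in>E. h e = j}. u j e))"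
    unfolding USW_def util_def using K_sub
    by (intro sum.cong refl sum.union_disjoint) (auto simp: E_def intro: finite_subset)
  also have "(\<Sum>j<n. \<Sum>e\<in>{e\<in>E. h e = j}. u j e) = (\<Sum>e\<in>E. u (h e) e)"
    using sum.group[of E "{..<n}" h "\<lambda>e. u (h e) e"] h_lt by (auto simp: E_def)
  ultimately show ?thesis
    by (simp add: sum.distrib)
qed

lemma max_card_usw_ge_keep_and_spread:
  fixes K :: "nat \<Rightarrow> nat set" and n m :: nat
  defines "E \<equiv> {..<m} - (\<Union>j<n. K j)"
  assumes K_sub: "\<And>j. j < n \<Longrightarrow> K j \<subseteq> {..<m}"
    and K_disj: "\<And>i j. i < n \<Longrightarrow> j < n \<Longrightarrow> i \<noteq> j \<Longrightarrow> K i \<inter> K j = {}"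
    and K_card: "\<And>j. j < n \<Longrightarrow> card (K j) \<le> k" and "m \<le> k * n"
  shows "(\<Sum>j<n. util u j (K j)) + (\<Sum>g\<in>E. spread n (\<lambda>j. k - card (K j)) u g) \<le> MAX_CARD_USW n m k u"
proof -
  define free where "free j = k - card (K j)" for j
  have "finite (K j)" if "j < n" for j
    using K_sub that finite_subset by blast
  then have "card E = m - (\<Sum>j<n. card (K j))"
    unfolding E_def using K_sub K_disj by (subst card_Diff_subset) (auto simp: card_UN_disjoint)
  also have "\<dots> \<le> k * n - (\<Sum>j<n. card (K j))"
    using \<open>m \<le> k * n\<close> by (rule diff_le_mono)
  also have "\<dots> = (\<Sum>j<n. free j)"
    unfolding free_def using K_card by (subst sum_subtractf_nat) (auto simp: mult.commute)
  finally have card_E: "card E \<le> (\<Sum>j<n. free j)" .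
  then obtain h where h_lt: "\<forall>e\<in>E. h e < n" and h_card: "\<forall>j<n. card {e\<in>E. h e = j} \<le> free j"
    and h_val: "(\<Sum>e\<in>E. \<Sum>j<n. real (free j) * u j e) \<le> real (\<Sum>j<n. free j) * (\<Sum>e\<in>E. u (h e) e)"
    using exists_capacitated_assignment[of E free n u] by (auto simp: E_def)
  have "(\<Sum>e\<in>E. spread n free u e) \<le> (\<Sum>e\<in>E. u (h e) e)"
  proof (cases "E = {}")
    case False
    then have "0 < card E"
      by (simp add: E_def card_gt_0_iff)
    then have "0 < (\<Sum>j<n. real (free j))"
      using card_E by (metis of_nat_0_less_iff of_nat_sum order_less_le_trans)
    then show ?thesis
      using h_val by (simp add: spread_def sum_divide_distrib[symmetric] pos_divide_le_eq mult.commute)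
  qed simp
  moreover have "is_cardinal n m k (\<lambda>j. K j \<union> {e\<in>E. h e = j})"
    unfolding E_def
  proof (rule is_cardinal_keep_and_assign[OF K_sub K_disj])
    fix j assume "j < n"
    then show "card (K j) + card {e \<in> {..<m} - (\<Union>j<n. K j). h e = j} \<le> k"
      using h_card K_card unfolding E_def free_def by fastforce
  qed (use h_lt E_def in auto)
  then have "USW n u (\<lambda>j. K j \<union> {e\<in>E. h e = j}) \<le> MAX_CARD_USW n m k u"
    by (rule usw_le_max_card_usw)
  ultimately show ?thesis
    using usw_keep_and_assign[of n K m h u] K_sub h_lt unfolding E_def free_def by simp
qed

section \<open>The upper bound\<close>

locale best_owner =
  fixes n m k :: nat and u :: "nat \<Rightarrow> nat \<Rightarrow> real" and owner :: "nat \<Rightarrow> nat"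
  assumes valid: "valid_instance n m u" and k_pos: "0 < k" and m_le: "m \<le> k * n"
    and owner_lt: "\<And>g. owner g < n"
    and owner_best: "\<And>j g. j < n \<Longrightarrow> u j g \<le> u (owner g) g"
begin

definition owned :: "nat \<Rightarrow> nat set" where
  "owned j = {g. g < m \<and> owner g = j}"

definition free :: "nat \<Rightarrow> nat" where
  "free j = k - min (card (owned j)) k"

lemma finite_owned [simp]: "finite (owned j)"
  by (simp add: owned_def)

lemma sum_owned: "(\<Sum>j<n. sum \<phi> (owned j)) = (\<Sum>g<m. \<phi> g)"
  unfolding owned_def using owner_lt by (intro sum_fibres)

lemma opt_usw_le_owner_welfare: "OPT_USW n m u \<le> (\<Sum>j<n. util u j (owned j))"
proof -
  have "OPT_USW n m u \<le> (\<Sum>g<m. u (owner g) g)"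
    using owner_lt[of 0] owner_best by (intro opt_usw_le_sum_bound) auto
  also have "\<dots> = (\<Sum>j<n. util u j (owned j))"
    using usw_fibres[of m owner n u] owner_lt by (simp add: USW_def owned_def)
  finally show ?thesis .
qed

lemma owner_welfare_le_max_card_usw:
  assumes "\<And>j. j < n \<Longrightarrow> card (owned j) \<le> k"
  shows "(\<Sum>j<n. util u j (owned j)) \<le> MAX_CARD_USW n m k u"
proof -
  have "is_cardinal n m k owned"
    using is_allocation_fibres[of m owner n] owner_lt assms
    by (simp add: is_cardinal_def owned_def[abs_def])
  then show ?thesis
    using usw_le_max_card_usw by (fastforce simp: USW_def)
qed

lemma sum_free_pos:
  assumes "j < n" and "k < card (owned j)"
  shows "0 < (\<Sum>j<n. free j)"
proof -
  have "(\<Sum>i<n. min (card (owned i)) k) < (\<Sum>i<n. card (owned i))"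
    using assms by (intro sum_strict_mono_ex1) (auto intro!: bexI[of _ j])
  also have "\<dots> = m"
    using sum_owned[of "\<lambda>_. 1::nat"] by simp
  finally have "(\<Sum>i<n. min (card (owned i)) k) < k * n"
    using m_le by linarith
  then show ?thesis
    unfolding free_def by (subst sum_subtractf_nat) (auto simp: mult.commute)
qed

text \<open>Each agent keeps the min (b, k) of its b owned goods on which it beats the spread value the
  most.\<close>
lemma max_card_usw_ge_kept_fraction:
  assumes "0 < (\<Sum>j<n. free j)"
  shows "1 + (\<Sum>j<n. real (min (card (owned j)) k) / real (card (owned j))
              * (util u j (owned j) - sum (spread n free u) (owned j)))
         \<le> MAX_CARD_USW n m k u"
proof -
  define \<nu> where "\<nu> = spread n free u"
  have "\<forall>j. \<exists>K\<subseteq>owned j. card K = min (card (owned j)) k \<and>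
      real (min (card (owned j)) k) / real (card (owned j)) * (\<Sum>g\<in>owned j. u j g - \<nu> g)
        \<le> (\<Sum>g\<in>K. u j g - \<nu> g)"
    by (intro allI exists_subset_sum_ge_fraction) simp
  then obtain K where K_sub: "\<And>j. K j \<subseteq> owned j" and K_card: "\<And>j. card (K j) = min (card (owned j)) k"
    and K_frac: "\<And>j. real (min (card (owned j)) k) / real (card (owned j)) * (\<Sum>g\<in>owned j. u j g - \<nu> g)
                     \<le> (\<Sum>g\<in>K j. u j g - \<nu> g)"
    by metis
  have K_disj: "K i \<inter> K j = {}" if "i \<noteq> j" for i j
    using K_sub[of i] K_sub[of j] that by (auto simp: owned_def)
  have K_fin: "finite (K j)" for j
    using K_sub finite_owned finite_subset by blast
  have K_lt: "K j \<subseteq> {..<m}" for j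
    using K_sub by (auto simp: owned_def)
  have "free = (\<lambda>j. k - card (K j))"
    by (simp add: free_def[abs_def] K_card)
  then have keep: "(\<Sum>j<n. util u j (K j)) + (\<Sum>g\<in>{..<m} - (\<Union>j<n. K j). \<nu> g) \<le> MAX_CARD_USW n m k u"
    using max_card_usw_ge_keep_and_spread[of n K m k u] K_lt K_disj K_card m_le
    unfolding \<nu>_def by (simp add: min_le_iff_disj)
  have "(\<Sum>g\<in>{..<m} - (\<Union>j<n. K j). \<nu> g) = (\<Sum>g<m. \<nu> g) - (\<Sum>j<n. \<Sum>g\<in>K j. \<nu> g)"
    using K_lt K_disj K_fin by (simp add: sum_diff sum.UNION_disjoint UN_least)
  also have "(\<Sum>g<m. \<nu> g) = 1"
    unfolding \<nu>_def using sum_spread[OF valid assms] .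
  finally have "1 + (\<Sum>j<n. \<Sum>g\<in>K j. u j g - \<nu> g) \<le> MAX_CARD_USW n m k u"
    using keep by (simp add: util_def sum_subtractf)
  moreover have "(\<Sum>j<n. real (min (card (owned j)) k) / real (card (owned j))
      * (util u j (owned j) - sum \<nu> (owned j))) \<le> (\<Sum>j<n. \<Sum>g\<in>K j. u j g - \<nu> g)"
    using K_frac by (intro sum_mono) (simp add: util_def sum_subtractf)
  ultimately show ?thesis
    unfolding \<nu>_def by linarith
qed

lemma spread_owned_bounds:
  assumes "0 < (\<Sum>j<n. free j)" and "j < n"
  shows "0 \<le> sum (spread n free u) (owned j)" and "sum (spread n free u) (owned j) \<le> util u j (owned j)"
    and "util u j (owned j) \<le> 1"
proof -
  have u_nonneg: "0 \<le> u j g" if "g < m" for g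
    using valid assms(2) that by (simp add: valid_instance_def)
  show "0 \<le> sum (spread n free u) (owned j)"
    using spread_nonneg[OF valid] by (intro sum_nonneg) (auto simp: owned_def)
  show "sum (spread n free u) (owned j) \<le> util u j (owned j)"
    unfolding util_def using spread_le[OF assms(1)] owner_best
    by (intro sum_mono) (auto simp: owned_def)
  have "util u j (owned j) \<le> (\<Sum>g<m. u j g)"
    unfolding util_def using u_nonneg by (intro sum_mono2) (auto simp: owned_def)
  then show "util u j (owned j) \<le> 1"
    using valid assms(2) by (simp add: valid_instance_def)
qed

lemma opt_usw_le_poc_bound_mult:
  assumes "0 < m"
  shows "OPT_USW n m u \<le> poc_bound m k * MAX_CARD_USW n m k u"
proof -
  define \<rho> where "\<rho> = poc_bound m k"
  have \<rho>: "1 \<le> \<rho>" "4 * \<rho> * (\<rho> - 1) * real k = real m - 1"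
    unfolding \<rho>_def using poc_bound_ge_one poc_bound_equation k_pos assms by auto
  define W where "W = (\<Sum>j<n. util u j (owned j))"
  have "W \<le> \<rho> * MAX_CARD_USW n m k u"
  proof (cases "\<forall>j<n. card (owned j) \<le> k")
    case True
    then have "W \<le> MAX_CARD_USW n m k u"
      unfolding W_def by (intro owner_welfare_le_max_card_usw) auto
    moreover have "0 \<le> W"
      using valid unfolding W_def util_def valid_instance_def
      by (intro sum_nonneg) (auto simp: owned_def)
    ultimately have "MAX_CARD_USW n m k u \<le> \<rho> * MAX_CARD_USW n m k u"
      using mult_right_mono[OF \<rho>(1), of "MAX_CARD_USW n m k u"] by simp
    with \<open>W \<le> MAX_CARD_USW n m k u\<close> show ?thesis
      by linarith
  next
    case False
    then have free_pos: "0 < (\<Sum>j<n. free j)"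
      using sum_free_pos by (auto simp: not_le)
    have "W \<le> \<rho> * (1 + (\<Sum>j<n. real (min (card (owned j)) k) / real (card (owned j))
                              * (util u j (owned j) - sum (spread n free u) (owned j))))"
      unfolding W_def
    proof (rule sum_owner_loss_bound[OF \<rho> k_pos])
      show "(\<Sum>j<n. card (owned j)) = m"
        using sum_owned[of "\<lambda>_. 1::nat"] by simp
      show "(\<Sum>j<n. sum (spread n free u) (owned j)) = 1"
        using sum_owned[of "spread n free u"] sum_spread[OF valid free_pos] by simp
    qed (use spread_owned_bounds[OF free_pos] in \<open>auto simp: util_def\<close>)
    also have "\<dots> \<le> \<rho> * MAX_CARD_USW n m k u"
      using max_card_usw_ge_kept_fraction[OF free_pos] \<rho>(1) by (intro mult_left_mono) auto
    finally show ?thesis .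
  qed
  then show ?thesis
    using opt_usw_le_owner_welfare unfolding W_def \<rho>_def by linarith
qed

end

lemma exists_best_owner:
  fixes u :: "nat \<Rightarrow> nat \<Rightarrow> real"
  assumes "0 < n"
  obtains owner where "\<And>g. owner g < n" and "\<And>j g. j < n \<Longrightarrow> u j g \<le> u (owner g) g"
proof -
  have "\<exists>i<n. \<forall>j<n. u j g \<le> u i g" for g
    using ex_is_arg_min_if_finite[of "{..<n}" "\<lambda>j. - u j g"] assms
    by (auto simp: is_arg_min_linorder)
  then show ?thesis
    using that by metis
qed

lemma opt_usw_pos:
  assumes "0 < n" and "valid_instance n m u"
  shows "0 < OPT_USW n m u"
proof -
  have "USW n u (\<lambda>i. {g. g < m \<and> 0 = i}) = (\<Sum>g<m. u 0 g)"
    using usw_fibres[of m "\<lambda>_. 0" n u] assms(1) by simp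
  also have "\<dots> = 1"
    using assms by (simp add: valid_instance_def)
  moreover have "is_allocation n m (\<lambda>i. {g. g < m \<and> 0 = i})"
    using is_allocation_fibres[of m "\<lambda>_. 0" n] assms(1) by simp
  ultimately show ?thesis
    using usw_le_opt_usw[of n m _ u] by fastforce
qed

lemma opt_usw_div_max_card_usw_le_poc_bound:
  assumes "0 < n" and "0 < m" and "0 < k" and "m \<le> k * n" and "valid_instance n m u"
  shows "OPT_USW n m u / MAX_CARD_USW n m k u \<le> poc_bound m k"
proof -
  obtain owner where "\<And>g. owner g < n" and "\<And>j g. j < n \<Longrightarrow> u j g \<le> u (owner g) g"
    using exists_best_owner[OF assms(1), of u] by blast
  then interpret best_owner n m k u owner
    using assms by unfold_locales auto
  have bound: "OPT_USW n m u \<le> poc_bound m k * MAX_CARD_USW n m k u"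
    using opt_usw_le_poc_bound_mult[OF assms(2)] .
  moreover have "0 < OPT_USW n m u"
    using opt_usw_pos assms(1,5) .
  ultimately have "0 < poc_bound m k * MAX_CARD_USW n m k u"
    by linarith
  moreover have "0 < poc_bound m k"
    using poc_bound_ge_one[OF assms(3,2)] by linarith
  ultimately have "0 < MAX_CARD_USW n m k u"
    by (simp add: zero_less_mult_iff)
  then show ?thesis
    using bound by (simp add: pos_divide_le_eq mult.commute)
qed

section \<open>A tight instance\<close>

lemma sum_div_mod_blocks:
  fixes f :: "nat \<Rightarrow> nat \<Rightarrow> 'a::comm_monoid_add"
  shows "(\<Sum>g<r * p. f (g div p) (g mod p)) = (\<Sum>i<r. \<Sum>t<p. f i t)"
proof -
  have "(\<Sum>g\<in>{i * p..<i * p + p}. f (g div p) (g mod p)) = (\<Sum>t<p. f i t)" for i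
    using sum.shift_bounds_nat_ivl[of "\<lambda>g. f (g div p) (g mod p)" 0 "i * p" p]
    by (simp add: atLeast0LessThan add.commute)
  then show ?thesis
    using sum.nat_group[of "\<lambda>g. f (g div p) (g mod p)" p r] by (simp add: mult.commute)
qed

lemma block_index_less:
  fixes j t p r :: nat
  assumes "j < r" and "t < p"
  shows "j * p + t < r * p"
proof -
  have "j * p + t < Suc j * p"
    using assms by simp
  also have "\<dots> \<le> r * p"
    using assms by (intro mult_right_mono) auto
  finally show ?thesis .
qed

definition block_utility :: "nat \<Rightarrow> nat \<Rightarrow> nat \<Rightarrow> nat \<Rightarrow> real" where
  "block_utility r p i g = (if i < r then of_bool (g div p = i) / real p else of_bool (g = r * p))"

lemma valid_block_utility:
  assumes "0 < p"
  shows "valid_instance n (r * p + 1) (block_utility r p)"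
  unfolding valid_instance_def
proof (intro conjI allI impI)
  fix i g
  show "0 \<le> block_utility r p i g"
    by (simp add: block_utility_def)
next
  fix i
  have "(\<Sum>g<r * p. block_utility r p i g) = (\<Sum>g<r * p. block_utility r p i (g div p * p + g mod p))"
    by simp
  also have "\<dots> = (\<Sum>j<r. \<Sum>t<p. block_utility r p i (j * p + t))"
    by (rule sum_div_mod_blocks)
  also have "\<dots> = (\<Sum>j<r. \<Sum>t<p. of_bool (j = i) / real p)"
    using block_index_less[of _ r _ p] by (intro sum.cong refl) (auto simp: block_utility_def less_not_refl3)
  also have "\<dots> = of_bool (i < r)"
    using assms by (simp add: sum.If_cases)
  finally show "(\<Sum>g<r * p + 1. block_utility r p i g) = 1"
    using assms by (simp add: block_utility_def)
qed

lemma block_utility_le: "block_utility r p i g \<le> of_bool (i < r) / real p + of_bool (g = r * p)"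
  by (simp add: block_utility_def)

lemma opt_usw_block_utility:
  assumes "0 < p" and "r < n"
  shows "OPT_USW n (r * p + 1) (block_utility r p) = real r + 1"
proof (rule antisym)
  have "OPT_USW n (r * p + 1) (block_utility r p) \<le> (\<Sum>g<r * p + 1. if g < r * p then 1 / real p else 1)"
  proof (rule opt_usw_le_sum_bound)
    fix i g assume "g < r * p + 1"
    then show "block_utility r p i g \<le> (if g < r * p then 1 / real p else 1)"
      using assms by (auto simp: block_utility_def)
  qed (use assms in simp)
  also have "\<dots> = real r + 1"
    using assms by simp
  finally show "OPT_USW n (r * p + 1) (block_utility r p) \<le> real r + 1" .
next
  have div_lt: "g div p < n" if "g < r * p + 1" for g
    using div_le_mono[of g "r * p" p] that assms by simp
  have "block_utility r p (g div p) g = 1 / real p" if "g < r * p" for g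
    using that assms by (simp add: block_utility_def less_mult_imp_div_less)
  then have "USW n (block_utility r p) (\<lambda>i. {g. g < r * p + 1 \<and> g div p = i}) = real r + 1"
    using assms by (simp add: usw_fibres[OF div_lt] block_utility_def)
  moreover have "is_allocation n (r * p + 1) (\<lambda>i. {g. g < r * p + 1 \<and> g div p = i})"
    using div_lt by (rule is_allocation_fibres)
  ultimately show "real r + 1 \<le> OPT_USW n (r * p + 1) (block_utility r p)"
    using usw_le_opt_usw by metis
qed

lemma usw_block_utility_le:
  assumes A: "is_cardinal n (r * p + 1) k A" and "r \<le> n"
  shows "USW n (block_utility r p) A \<le> real (r * k) / real p + 1"
proof -
  have "USW n (block_utility r p) A \<le> (\<Sum>i<n. \<Sum>g\<in>A i. of_bool (i < r) / real p + of_bool (g = r * p))"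
    unfolding USW_def util_def using block_utility_le by (intro sum_mono) auto
  also have "\<dots> = (\<Sum>i<n. of_bool (i < r) * real (card (A i)) / real p)
      + USW n (\<lambda>_ g. of_bool (g = r * p)) A"
    by (simp add: USW_def util_def sum.distrib mult.commute)
  also have "\<dots> \<le> (\<Sum>i<n. of_bool (i < r) * real k / real p) + (\<Sum>g<r * p + 1. of_bool (g = r * p))"
  proof (intro add_mono sum_mono divide_right_mono mult_left_mono)
    show "USW n (\<lambda>_ g. of_bool (g = r * p)) A \<le> (\<Sum>g<r * p + 1. of_bool (g = r * p))"
      using A by (intro usw_le_sum_bound) (auto simp: is_cardinal_def)
  qed (use A in \<open>auto simp: is_cardinal_def\<close>)
  also have "(\<Sum>i<n. of_bool (i < r) * real k / real p) = (\<Sum>i<r. real k / real p)"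
    using \<open>r \<le> n\<close> by (intro sum.mono_neutral_cong_right) auto
  finally show ?thesis
    by simp
qed

text \<open>Block agent i gets the first k goods of its block, agent r the last good, and every other
  good an agent of its own.\<close>
definition block_assignment :: "nat \<Rightarrow> nat \<Rightarrow> nat \<Rightarrow> nat \<Rightarrow> nat" where
  "block_assignment r p k g = (if g mod p < k then g div p else r + 1 + g)"

lemma block_assignment_lt:
  assumes "0 < p" and "0 < k" and "r * p + r < n" and "g < r * p + 1"
  shows "block_assignment r p k g < n"
proof (cases "g mod p < k")
  case True
  then show ?thesis
    using div_le_mono[of g "r * p" p] assms by (simp add: block_assignment_def)
next
  case False
  then have "g \<noteq> r * p"
    using assms(2) by auto
  then show ?thesis
    using False assms(3,4) by (simp add: block_assignment_def)
qed

lemma card_block_assignment_fibre: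
  assumes "0 < p" and "0 < k"
  shows "card {g. g < r * p + 1 \<and> block_assignment r p k g = i} \<le> k"
proof (cases "i \<le> r")
  case True
  have "{g. g < r * p + 1 \<and> block_assignment r p k g = i} \<subseteq> (\<lambda>t. i * p + t) ` {..<k}"
  proof
    fix g assume "g \<in> {g. g < r * p + 1 \<and> block_assignment r p k g = i}"
    then have "g mod p < k" and "g div p = i"
      using True by (auto simp: block_assignment_def split: if_splits)
    then show "g \<in> (\<lambda>t. i * p + t) ` {..<k}"
      by (metis div_mult_mod_eq image_eqI lessThan_iff)
  qed
  then have "card {g. g < r * p + 1 \<and> block_assignment r p k g = i} \<le> card ((\<lambda>t. i * p + t) ` {..<k})"
    by (intro card_mono) auto
  also have "\<dots> \<le> k"
    using card_image_le[of "{..<k}" "\<lambda>t. i * p + t"] by simp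
  finally show ?thesis .
next
  case False
  have "{g. g < r * p + 1 \<and> block_assignment r p k g = i} \<subseteq> {i - (r + 1)}"
  proof
    fix g assume g: "g \<in> {g. g < r * p + 1 \<and> block_assignment r p k g = i}"
    have "g div p \<le> r"
      using div_le_mono[of g "r * p" p] g assms(1) by simp
    then show "g \<in> {i - (r + 1)}"
      using g False by (auto simp: block_assignment_def split: if_splits)
  qed
  then have "card {g. g < r * p + 1 \<and> block_assignment r p k g = i} \<le> card {i - (r + 1)}"
    by (intro card_mono) auto
  then show ?thesis
    using assms(2) by simp
qed

lemma usw_block_assignment:
  assumes "0 < k" and "k \<le> p"
  shows "(\<Sum>g<r * p + 1. block_utility r p (block_assignment r p k g) g) = real (r * k) / real p + 1"
proof -
  have "block_utility r p (block_assignment r p k g) g = of_bool (g mod p < k) / real p"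
    if "g < r * p" for g
    using that less_mult_imp_div_less[OF that]
    by (auto simp: block_assignment_def block_utility_def)
  then have "(\<Sum>g<r * p. block_utility r p (block_assignment r p k g) g)
      = (\<Sum>g<r * p. of_bool (g mod p < k) / real p)"
    by simp
  also have "\<dots> = (\<Sum>j<r. \<Sum>t<p. of_bool (t < k) / real p)"
    using sum_div_mod_blocks[where f = "\<lambda>j t. of_bool (t < k) / real p"] by simp
  also have "(\<Sum>t<p. of_bool (t < k) / real p) = (\<Sum>t<k. 1 / real p)"
    using assms by (intro sum.mono_neutral_cong_right) auto
  finally show ?thesis
    using assms by (simp add: block_assignment_def block_utility_def)
qed

lemma max_card_usw_block_utility:
  assumes "0 < k" and "k \<le> p" and "r * p + r < n"
  shows "MAX_CARD_USW n (r * p + 1) k (block_utility r p) = real (r * k) / real p + 1"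
proof -
  have lt: "block_assignment r p k g < n" if "g < r * p + 1" for g
    using block_assignment_lt[OF _ assms(1,3) that] assms(1,2) by simp
  have "is_cardinal n (r * p + 1) k (\<lambda>i. {g. g < r * p + 1 \<and> block_assignment r p k g = i})"
    using is_allocation_fibres[OF lt] card_block_assignment_fibre assms(1,2)
    by (simp add: is_cardinal_def)
  moreover have "USW n (block_utility r p) (\<lambda>i. {g. g < r * p + 1 \<and> block_assignment r p k g = i})
      = real (r * k) / real p + 1"
    using usw_fibres[OF lt] usw_block_assignment[OF assms(1,2)] by simp
  moreover have "r \<le> n"
    using assms(3) by simp
  ultimately show ?thesis
    using max_card_usw_le[of n "r * p + 1" k _ "block_utility r p"] usw_block_utility_le[of n r p k]
      usw_le_max_card_usw[of n "r * p + 1" k _ "block_utility r p"]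
    by (metis (no_types, lifting) antisym)
qed

lemma block_welfare_ratio:
  assumes "0 < k" and "1 \<le> c"
  shows "(real (c - 1) + 1) / (real ((c - 1) * k) / real (k * (c + 1)) + 1) = (1 + real c) / 2"
proof -
  have "real ((c - 1) * k) = real k * (real c - 1)" and "real (k * (c + 1)) = real k * (real c + 1)"
    using assms(2) by (simp_all add: of_nat_diff algebra_simps)
  then have "real ((c - 1) * k) / real (k * (c + 1)) = (real c - 1) / (real c + 1)"
    using assms(1) by simp
  then have "(real (c - 1) + 1) / (real ((c - 1) * k) / real (k * (c + 1)) + 1)
      = real c / ((real c - 1) / (real c + 1) + 1)"
    using assms(2) by (simp add: of_nat_diff)
  also have "\<dots> = (1 + real c) / 2"
    using assms(2) by (simp add: field_simps)
  finally show ?thesis .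
qed

lemma poc_bound_attained:
  assumes "0 < k" and "2 \<le> c" and m: "m = k * (c\<^sup>2 - 1) + 1"
  shows "\<exists>n u. 0 < n \<and> m \<le> k * n \<and> valid_instance n m u
           \<and> OPT_USW n m u / MAX_CARD_USW n m k u = poc_bound m k"
proof -
  define r p where "r = c - 1" and "p = k * (c + 1)"
  define n where "n = r * p + r + 1"
  have "c\<^sup>2 - 1 = r * (c + 1)"
    using assms(2) by (simp add: r_def power2_eq_square algebra_simps)
  then have m_eq: "m = r * p + 1"
    by (simp add: m p_def algebra_simps)
  have "0 < p" and "k \<le> p"
    using assms(1) by (simp_all add: p_def)
  have "OPT_USW n m (block_utility r p) / MAX_CARD_USW n m k (block_utility r p)
      = (real r + 1) / (real (r * k) / real p + 1)"
    unfolding m_eq n_def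
    using opt_usw_block_utility[OF \<open>0 < p\<close>] max_card_usw_block_utility[OF assms(1) \<open>k \<le> p\<close>] by simp
  also have "\<dots> = (1 + real c) / 2"
    unfolding r_def p_def using block_welfare_ratio assms(1,2) by simp
  also have "\<dots> = poc_bound m k"
    using poc_bound_square assms m by simp
  finally have "OPT_USW n m (block_utility r p) / MAX_CARD_USW n m k (block_utility r p) = poc_bound m k" .
  moreover have "m \<le> k * n"
  proof -
    have "m \<le> n"
      by (simp add: m_eq n_def)
    also have "\<dots> \<le> k * n"
      using assms(1) by simp
    finally show ?thesis .
  qed
  ultimately show ?thesis
    using valid_block_utility[OF \<open>0 < p\<close>, of n r] m_eq by (auto simp: n_def)
qed

theorem theorem1:
  shows "(\<forall>n m k (u :: nat \<Rightarrow> nat \<Rightarrow> real).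
            0 < n \<and> 0 < m \<and> 0 < k \<and> k < m \<and> m \<le> k * n \<and> valid_instance n m u
            \<longrightarrow> OPT_USW n m u / MAX_CARD_USW n m k u \<le> poc_bound m k)
       \<and> (\<forall>m k (c :: nat). 0 < k \<and> 2 \<le> c \<and> m = k * (c^2 - 1) + 1
            \<longrightarrow> (\<exists>n (u :: nat \<Rightarrow> nat \<Rightarrow> real). 0 < n \<and> m \<le> k * n \<and> valid_instance n m u
                  \<and> OPT_USW n m u / MAX_CARD_USW n m k u = poc_bound m k))"
proof (intro conjI allI impI)
  fix n m k :: nat and u :: "nat \<Rightarrow> nat \<Rightarrow> real"
  assume "0 < n \<and> 0 < m \<and> 0 < k \<and> k < m \<and> m \<le> k * n \<and> valid_instance n m u"
  then show "OPT_USW n m u / MAX_CARD_USW n m k u \<le> poc_bound m k"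
    using opt_usw_div_max_card_usw_le_poc_bound by blast
next
  fix m k c :: nat
  assume "0 < k \<and> 2 \<le> c \<and> m = k * (c^2 - 1) + 1"
  then show "\<exists>n (u :: nat \<Rightarrow> nat \<Rightarrow> real). 0 < n \<and> m \<le> k * n \<and> valid_instance n m u
                  \<and> OPT_USW n m u / MAX_CARD_USW n m k u = poc_bound m k"
    using poc_bound_attained by blast
qed

end
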